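(* Let $p$ be a prime and let $\alpha\in\mathbf{Bad}$ with $\alpha>0$. Suppose there is a sequence of natural numbers $\{\ell_m\}_{m\in\mathbb{N}}$ such that $p^{\ell_m}\alpha$ is not an infinite loop mod $p^m$ for every $m\in\mathbb{N}$. Then $m_p(\alpha)=0$.
   Context: $\mathbf{Bad}=\{\alpha\in\mathbb{R}:\inf_{q\in\mathbb{N}}q\|q\alpha\|>0\}$, $\|x\|$ the distance to the nearest integer; $m_p(\alpha)=\inf_{q\in\mathbb{N}} q\,|q|_p\,\|q\alpha\|$ with $|\cdot|_p$ the $p$-adic absolute value. For $\alpha$ with continued fraction $[a_0;a_1,\ldots]$ and convergent denominators $q_{-1}=0,q_0=1,q_k=a_kq_{k-1}+q_{k-2}$, the semi-convergent denominators are $mq_k+q_{k-1}$ for $0\le m\le a_{k+1}$. A real $\alpha>0$ is an \emph{infinite loop mod $n$} if none of its semi-convergent denominators is divisible by $n$, except $q_{-1}=0$. *)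

theory Defs
  imports "HOL-Analysis.Analysis" "HOL-Computational_Algebra.Primes"
begin

definition dist_int :: "real \<Rightarrow> real" where
  "dist_int x = \<bar>x - of_int (round x)\<bar>"

definition Bad :: "real set" where
  "Bad = {\<alpha>. (INF q\<in>{1::nat..}. real q * dist_int (real q * \<alpha>)) > 0}"

definition padic_abs :: "nat \<Rightarrow> nat \<Rightarrow> real" where
  "padic_abs p q = (if q = 0 then 0 else inverse (real p) ^ multiplicity p q)"

definition m_p :: "nat \<Rightarrow> real \<Rightarrow> real" where
  "m_p p \<alpha> = (INF q\<in>{1::nat..}. real q * padic_abs p q * dist_int (real q * \<alpha>))"

fun cf_rem :: "real \<Rightarrow> nat \<Rightarrow> real" where
  "cf_rem \<alpha> 0 = \<alpha>"
| "cf_rem \<alpha> (Suc k) = 1 / frac (cf_rem \<alpha> k)"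

definition cf_a :: "real \<Rightarrow> nat \<Rightarrow> int" where
  "cf_a \<alpha> k = \<lfloor>cf_rem \<alpha> k\<rfloor>"

text \<open>Shifted convergent denominators: cf_den \<alpha> n = q_{n-1}, so
  cf_den \<alpha> 0 = q_{-1} = 0, cf_den \<alpha> 1 = q_0 = 1,
  q_k = a_k q_{k-1} + q_{k-2}.\<close>
fun cf_den :: "real \<Rightarrow> nat \<Rightarrow> int" where
  "cf_den \<alpha> 0 = 0"
| "cf_den \<alpha> (Suc 0) = 1"
| "cf_den \<alpha> (Suc (Suc n)) = cf_a \<alpha> (Suc n) * cf_den \<alpha> (Suc n) + cf_den \<alpha> n"

text \<open>Semi-convergent denominators m q_k + q_{k-1}, k \<ge> 0, 0 \<le> m \<le> a_{k+1}.\<close>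
definition semiconv_dens :: "real \<Rightarrow> int set" where
  "semiconv_dens \<alpha> = {int m * cf_den \<alpha> (Suc k) + cf_den \<alpha> k | k m. int m \<le> cf_a \<alpha> (Suc k)}"

text \<open>\<alpha> > 0 is an infinite loop mod n if no semi-convergent denominator other than
  q_{-1} = 0 is divisible by n.\<close>
definition infinite_loop_mod :: "nat \<Rightarrow> real \<Rightarrow> bool" where
  "infinite_loop_mod n \<alpha> \<longleftrightarrow> \<alpha> > 0 \<and>
     (\<forall>s\<in>semiconv_dens \<alpha>. s \<noteq> 0 \<longrightarrow> \<not> int n dvd s)"

end

theory Submission
  imports Defs
begin

text \<open>If \<open>m\<^sub>p(\<alpha>) = c > 0\<close>, every \<open>p^L \<alpha>\<close> is badly approximable with constant \<open>c\<close>,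
  since \<open>q |q|\<^sub>p \<parallel>q p^L \<alpha>\<parallel>\<close> is the \<open>m\<^sub>p\<close>-expression of \<open>q p^L\<close> and \<open>|q|\<^sub>p \<le> 1\<close>. Then all partial
  quotients are at most \<open>1/c\<close>, so every semi-convergent denominator \<open>s\<close> of \<open>p^L \<alpha>\<close> has
  \<open>s \<parallel>s p^L \<alpha>\<parallel> \<le> 1/c + 1\<close>. If moreover \<open>p^M\<close> divides \<open>s\<close>, then \<open>q = s p^L\<close> gives
  \<open>c \<le> p^-M (1/c + 1)\<close>, which fails for large \<open>M\<close>.\<close>

text \<open>Numerators shifted like \<open>cf_den\<close>: \<open>cf_num \<alpha> n = p\<^sub>n\<^sub>-\<^sub>1\<close>, with \<open>p\<^sub>-\<^sub>1 = 1\<close>.\<close>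

fun cf_num :: "real \<Rightarrow> nat \<Rightarrow> int" where
  "cf_num \<alpha> 0 = 1"
| "cf_num \<alpha> (Suc 0) = cf_a \<alpha> 0"
| "cf_num \<alpha> (Suc (Suc n)) = cf_a \<alpha> (Suc n) * cf_num \<alpha> (Suc n) + cf_num \<alpha> n"

definition cf_err :: "real \<Rightarrow> nat \<Rightarrow> real" where
  "cf_err b n = of_int (cf_den b n) * b - of_int (cf_num b n)"

definition bad_with_const :: "real \<Rightarrow> real \<Rightarrow> bool" where
  "bad_with_const c b \<longleftrightarrow> (\<forall>q::nat. q \<ge> 1 \<longrightarrow> c \<le> real q * dist_int (real q * b))"

lemma cf_err_Suc_Suc:
  "cf_err b (Suc (Suc n)) = of_int (cf_a b (Suc n)) * cf_err b (Suc n) + cf_err b n"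
  by (simp add: cf_err_def algebra_simps)

lemma cf_rem_not_Rats:
  assumes "b \<notin> \<rat>" shows "cf_rem b n \<notin> \<rat>"
proof (induction n)
  case 0 then show ?case using assms by simp
next
  case (Suc n)
  have "frac (cf_rem b n) \<notin> \<rat>"
  proof
    assume "frac (cf_rem b n) \<in> \<rat>"
    then have "frac (cf_rem b n) + of_int \<lfloor>cf_rem b n\<rfloor> \<in> \<rat>" by simp
    then show False using Suc by (simp add: frac_def)
  qed
  then show ?case by (simp add: divide_inverse Rats_inverse_iff)
qed

lemma frac_cf_rem_pos:
  assumes "b \<notin> \<rat>" shows "0 < frac (cf_rem b n)"
proof -
  have "cf_rem b n \<notin> \<int>" using cf_rem_not_Rats[OF assms, of n] Ints_subset_Rats by blast
  then show ?thesis using frac_ge_0[of "cf_rem b n"] frac_eq_0_iff by (metis order_le_less)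
qed

lemma cf_a_Suc_le:
  "real_of_int (cf_a b (Suc n)) \<le> 1 / frac (cf_rem b n)"
  using of_int_floor_le[of "cf_rem b (Suc n)"] by (simp add: cf_a_def)

lemma cf_a_Suc_ge_1:
  assumes "b \<notin> \<rat>" shows "cf_a b (Suc n) \<ge> 1"
proof -
  have "cf_rem b (Suc n) > 1"
    using frac_cf_rem_pos[OF assms, of n] frac_lt_1[of "cf_rem b n"] by (simp add: divide_simps)
  then show ?thesis unfolding cf_a_def by linarith
qed

lemma cf_den_mono:
  assumes "b \<notin> \<rat>"
  shows "0 \<le> cf_den b n \<and> cf_den b n \<le> cf_den b (Suc n) \<and> 1 \<le> cf_den b (Suc n)"
proof (induction n)
  case 0 then show ?case by simp
next
  case (Suc n)
  have "cf_den b (Suc n) \<le> cf_a b (Suc n) * cf_den b (Suc n)"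
    using cf_a_Suc_ge_1[OF assms, of n] Suc by (metis mult_1 mult_right_mono order.trans)
  then show ?case using Suc by (simp only: cf_den.simps) linarith
qed

lemma cf_err_Suc:
  assumes "b \<notin> \<rat>" shows "cf_err b (Suc n) = - cf_err b n * frac (cf_rem b n)"
proof (induction n)
  case 0 then show ?case by (simp add: cf_err_def cf_a_def frac_def)
next
  case (Suc n)
  have "cf_err b n = - cf_err b (Suc n) * cf_rem b (Suc n)"
    using Suc frac_cf_rem_pos[OF assms, of n] by (simp add: field_simps)
  then have "cf_err b (Suc (Suc n)) = cf_err b (Suc n) * (of_int (cf_a b (Suc n)) - cf_rem b (Suc n))"
    by (simp add: cf_err_Suc_Suc algebra_simps)
  also have "\<dots> = - cf_err b (Suc n) * frac (cf_rem b (Suc n))"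
    by (simp add: cf_a_def frac_def algebra_simps)
  finally show ?case .
qed

lemma cf_den_cf_err_det:
  "of_int (cf_den b (Suc n)) * cf_err b n - of_int (cf_den b n) * cf_err b (Suc n) = (-1) ^ Suc n"
  by (induction n) (simp_all add: cf_err_def cf_err_Suc_Suc algebra_simps)

lemma abs_cf_err_eq:
  assumes "b \<notin> \<rat>"
  shows "\<bar>cf_err b n\<bar> * (of_int (cf_den b (Suc n)) + of_int (cf_den b n) * frac (cf_rem b n)) = 1"
proof -
  have "cf_err b n * (of_int (cf_den b (Suc n)) + of_int (cf_den b n) * frac (cf_rem b n)) = (-1) ^ Suc n"
    using cf_den_cf_err_det[of b n] cf_err_Suc[OF assms, of n] by (simp add: algebra_simps)
  then have "\<bar>cf_err b n * (of_int (cf_den b (Suc n)) + of_int (cf_den b n) * frac (cf_rem b n))\<bar> = 1"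
    by simp
  moreover have "of_int (cf_den b (Suc n)) + of_int (cf_den b n) * frac (cf_rem b n) \<ge> 0"
    using cf_den_mono[OF assms, of n] frac_ge_0[of "cf_rem b n"] by simp
  ultimately show ?thesis by (simp add: abs_mult)
qed

lemma cf_den_abs_cf_err_le_1:
  assumes "b \<notin> \<rat>" shows "of_int (cf_den b (Suc n)) * \<bar>cf_err b n\<bar> \<le> 1"
proof -
  have "of_int (cf_den b n) * frac (cf_rem b n) \<ge> 0"
    using cf_den_mono[OF assms, of n] frac_ge_0[of "cf_rem b n"] by simp
  then have "\<bar>cf_err b n\<bar> * (of_int (cf_den b n) * frac (cf_rem b n)) \<ge> 0" by simp
  moreover have "of_int (cf_den b (Suc n)) * \<bar>cf_err b n\<bar>
      + \<bar>cf_err b n\<bar> * (of_int (cf_den b n) * frac (cf_rem b n)) = 1"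
    using abs_cf_err_eq[OF assms, of n] by (simp add: algebra_simps)
  ultimately show ?thesis by linarith
qed

lemma dist_int_le: "dist_int y \<le> \<bar>y - of_int z\<bar>"
  unfolding dist_int_def by (rule round_diff_minimal)

lemma dist_int_nonneg: "dist_int y \<ge> 0"
  unfolding dist_int_def by simp

lemma bad_with_const_not_Rats:
  assumes "c > 0" and "bad_with_const c b" shows "b \<notin> \<rat>"
proof
  assume "b \<in> \<rat>"
  then obtain x y where y: "y > 0" and "b = of_int x / of_int y" by (elim Rats_cases')
  then have "real (nat y) * b = of_int x" by simp
  then have "dist_int (real (nat y) * b) = 0" unfolding dist_int_def by simp
  moreover have "c \<le> real (nat y) * dist_int (real (nat y) * b)"
    using assms(2) y unfolding bad_with_const_def by (simp del: of_nat_nat)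
  ultimately show False using assms(1) by (simp del: of_nat_nat)
qed

lemma semiconv_dist_int_le:
  assumes irr: "b \<notin> \<rat>" and m: "int m \<le> cf_a b (Suc k)"
    and s: "s = int m * cf_den b (Suc k) + cf_den b k"
  shows "real_of_int s * dist_int (real_of_int s * b) \<le> real m + 1"
proof -
  define A where "A = real_of_int (cf_den b (Suc k))"
  define f where "f = frac (cf_rem b k)"
  define x where "x = \<bar>cf_err b k\<bar>"
  have den: "0 \<le> cf_den b k" "cf_den b k \<le> cf_den b (Suc k)" using cf_den_mono[OF irr, of k] by auto
  have f: "0 < f" "f < 1" using frac_cf_rem_pos[OF irr, of k] frac_lt_1 by (auto simp: f_def)
  have Ax: "A * x \<le> 1" using cf_den_abs_cf_err_le_1[OF irr, of k] by (simp add: A_def x_def)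
  have "real m \<le> 1 / f" using m cf_a_Suc_le[of b k] by (simp add: f_def)
  then have mf: "real m * f \<le> 1" using f by (simp add: field_simps)
  have "real_of_int s * b - of_int (int m * cf_num b (Suc k) + cf_num b k)
      = real m * cf_err b (Suc k) + cf_err b k"
    by (simp add: s cf_err_def algebra_simps)
  also have "\<dots> = cf_err b k * (1 - real m * f)"
    using cf_err_Suc[OF irr, of k] by (simp add: f_def algebra_simps)
  finally have "dist_int (real_of_int s * b) \<le> x * (1 - real m * f)"
    using dist_int_le[of "real_of_int s * b" "int m * cf_num b (Suc k) + cf_num b k"] mf
    by (simp add: x_def abs_mult)
  also have "\<dots> \<le> x" using mf f by (simp add: x_def mult_left_le)
  finally have "real_of_int s * dist_int (real_of_int s * b) \<le> real_of_int s * x"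
    using den s by (simp add: mult_left_mono)
  also have "\<dots> \<le> (real m + 1) * A * x"
  proof -
    have "real_of_int s \<le> (real m + 1) * A" using den s by (simp add: A_def distrib_right)
    then show ?thesis by (simp add: x_def mult_right_mono)
  qed
  also have "\<dots> \<le> real m + 1" using Ax by (simp add: mult.assoc mult_left_le)
  finally show ?thesis .
qed

lemma bad_with_const_le_frac_cf_rem:
  assumes irr: "b \<notin> \<rat>" and bad: "bad_with_const c b"
  shows "c \<le> frac (cf_rem b k)"
proof -
  define A where "A = cf_den b (Suc k)"
  define f where "f = frac (cf_rem b k)"
  have A: "A \<ge> 1" using cf_den_mono[OF irr, of k] by (simp add: A_def)
  have f: "0 < f" "f < 1" using frac_cf_rem_pos[OF irr, of k] frac_lt_1 by (auto simp: f_def)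
  have "c \<le> real (nat A) * dist_int (real (nat A) * b)"
    using bad A unfolding bad_with_const_def by (simp del: of_nat_nat)
  also have "\<dots> \<le> real_of_int A * \<bar>cf_err b (Suc k)\<bar>"
    using dist_int_le[of "real_of_int A * b" "cf_num b (Suc k)"] A
    by (simp add: cf_err_def A_def mult_left_mono)
  also have "\<dots> = (real_of_int A * \<bar>cf_err b k\<bar>) * f"
    using cf_err_Suc[OF irr, of k] f by (simp add: f_def abs_mult)
  also have "\<dots> \<le> f"
    using cf_den_abs_cf_err_le_1[OF irr, of k] f by (simp add: A_def mult_left_le_one_le)
  finally show ?thesis by (simp add: f_def)
qed

lemma semiconv_dens_bad_with_const:
  assumes c: "c > 0" and bad: "bad_with_const c b"
    and s: "s \<in> semiconv_dens b" "s \<noteq> 0"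
  shows "s > 0 \<and> real_of_int s * dist_int (real_of_int s * b) \<le> 1 / c + 1"
proof -
  have irr: "b \<notin> \<rat>" by (rule bad_with_const_not_Rats[OF c bad])
  obtain k m where sk: "s = int m * cf_den b (Suc k) + cf_den b k" and m: "int m \<le> cf_a b (Suc k)"
    using s(1) unfolding semiconv_dens_def by blast
  have "0 \<le> cf_den b k" "0 \<le> int m * cf_den b (Suc k)" using cf_den_mono[OF irr, of k] by auto
  then have "s > 0" using sk s(2) by linarith
  have "real m \<le> 1 / frac (cf_rem b k)" using m cf_a_Suc_le[of b k] by simp
  also have "\<dots> \<le> 1 / c"
    using bad_with_const_le_frac_cf_rem[OF irr bad, of k] c by (simp add: frac_le)
  finally show ?thesis using semiconv_dist_int_le[OF irr m sk] \<open>s > 0\<close> by (intro conjI) linarith+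
qed

lemma padic_abs_le_1: "p \<ge> 1 \<Longrightarrow> padic_abs p q \<le> 1"
  by (simp add: padic_abs_def power_le_one inverse_le_1_iff)

lemma padic_abs_nonneg: "padic_abs p q \<ge> 0"
  by (simp add: padic_abs_def)

lemma padic_abs_mult_prime_power:
  assumes "prime p" and "q \<noteq> 0"
  shows "padic_abs p (q * p ^ L) = padic_abs p q / real p ^ L"
proof -
  have "p ^ L \<noteq> 0" using assms(1) by (simp add: prime_gt_0_nat)
  then have "multiplicity p (q * p ^ L) = multiplicity p q + L"
    using prime_elem_multiplicity_mult_distrib[of p q "p ^ L"] assms
      multiplicity_same_power[of p L] prime_gt_1_nat[of p] by simp
  then show ?thesis using assms \<open>p ^ L \<noteq> 0\<close>
    by (simp add: padic_abs_def power_add power_inverse divide_inverse)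
qed

lemma padic_abs_le_if_prime_power_dvd:
  assumes "prime p" and "q \<noteq> 0" and "p ^ M dvd q"
  shows "padic_abs p q \<le> 1 / real p ^ M"
proof -
  have p: "real p \<ge> 1" using prime_ge_1_nat[OF assms(1)] by simp
  have "multiplicity p q \<ge> M"
    using assms prime_gt_1_nat[of p] by (intro multiplicity_geI) auto
  then have "inverse (real p) ^ multiplicity p q \<le> inverse (real p) ^ M"
    using p by (intro power_decreasing) (auto simp: inverse_le_1_iff)
  then show ?thesis using assms(2) by (simp add: padic_abs_def power_inverse divide_inverse)
qed

lemma m_p_le:
  assumes "q \<ge> 1" shows "m_p p \<alpha> \<le> real q * padic_abs p q * dist_int (real q * \<alpha>)"
  unfolding m_p_def
  by (rule cINF_lower)
    (use assms padic_abs_nonneg dist_int_nonneg in \<open>auto intro!: bdd_belowI[of _ 0]\<close>)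

lemma m_p_nonneg: "m_p p \<alpha> \<ge> 0"
  unfolding m_p_def by (rule cINF_greatest) (auto simp: padic_abs_nonneg dist_int_nonneg)

lemma m_p_scaled_eq:
  assumes "prime p" and "q \<noteq> 0"
  shows "real (q * p ^ L) * padic_abs p (q * p ^ L) * dist_int (real (q * p ^ L) * \<alpha>)
       = real q * padic_abs p q * dist_int (real q * (real p ^ L * \<alpha>))"
  using assms prime_gt_0_nat[of p]
  by (simp add: padic_abs_mult_prime_power mult.assoc mult.left_commute)

lemma bad_with_const_m_p_scaled:
  assumes "prime p" shows "bad_with_const (m_p p \<alpha>) (real p ^ L * \<alpha>)"
  unfolding bad_with_const_def
proof (intro allI impI)
  fix q :: nat assume q: "q \<ge> 1"
  have "m_p p \<alpha> \<le> real (q * p ^ L) * padic_abs p (q * p ^ L) * dist_int (real (q * p ^ L) * \<alpha>)"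
    using q prime_gt_0_nat[OF assms] by (intro m_p_le) simp
  also have "\<dots> = real q * padic_abs p q * dist_int (real q * (real p ^ L * \<alpha>))"
    using q by (intro m_p_scaled_eq[OF assms]) simp
  also have "\<dots> \<le> real q * 1 * dist_int (real q * (real p ^ L * \<alpha>))"
    using padic_abs_le_1[of p q] prime_ge_1_nat[OF assms] dist_int_nonneg
    by (intro mult_right_mono mult_left_mono) auto
  finally show "m_p p \<alpha> \<le> real q * dist_int (real q * (real p ^ L * \<alpha>))" by simp
qed

lemma m_p_prime_power_le:
  assumes p: "prime p" and c: "m_p p \<alpha> > 0"
    and s: "s \<in> semiconv_dens (real p ^ L * \<alpha>)" "s \<noteq> 0" "int (p ^ M) dvd s"
  shows "m_p p \<alpha> * real p ^ M \<le> 1 / m_p p \<alpha> + 1"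
proof -
  define c where "c = m_p p \<alpha>"
  define b where "b = real p ^ L * \<alpha>"
  have "s > 0" and sb: "real_of_int s * dist_int (real_of_int s * b) \<le> 1 / c + 1"
    using semiconv_dens_bad_with_const[OF c bad_with_const_m_p_scaled[OF p] s(1,2)]
    by (auto simp: c_def b_def)
  then obtain n where sn: "s = int n" and "n \<noteq> 0" using pos_int_cases by fastforce
  have "p ^ M dvd n" using s(3) by (simp add: sn flip: of_nat_power)
  have "c \<le> real (n * p ^ L) * padic_abs p (n * p ^ L) * dist_int (real (n * p ^ L) * \<alpha>)"
    unfolding c_def using \<open>n \<noteq> 0\<close> prime_gt_0_nat[OF p] by (intro m_p_le) simp
  also have "\<dots> = padic_abs p n * (real n * dist_int (real n * b))"
    unfolding m_p_scaled_eq[OF p \<open>n \<noteq> 0\<close>] b_def by (simp only: ac_simps)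
  also have "\<dots> \<le> 1 / real p ^ M * (1 / c + 1)"
    using padic_abs_le_if_prime_power_dvd[OF p \<open>n \<noteq> 0\<close> \<open>p ^ M dvd n\<close>] sb
      padic_abs_nonneg[of p n] dist_int_nonneg[of "real n * b"]
    by (intro mult_mono) (auto simp: sn)
  finally show ?thesis using prime_gt_0_nat[OF p] by (simp add: c_def divide_simps mult.commute)
qed

theorem corollary3p4:
  fixes p :: nat and \<alpha> :: real and l :: "nat \<Rightarrow> nat"
  assumes "prime p"
    and "\<alpha> \<in> Bad" and "\<alpha> > 0"
    and "\<And>m. m \<ge> 1 \<Longrightarrow> \<not> infinite_loop_mod (p ^ m) (real p ^ l m * \<alpha>)"
  shows "m_p p \<alpha> = 0"
proof (rule ccontr)
  define c where "c = m_p p \<alpha>"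
  assume "m_p p \<alpha> \<noteq> 0"
  then have c: "c > 0" using m_p_nonneg[of p \<alpha>] by (simp add: c_def)
  have "real p > 1" using prime_gt_1_nat[OF assms(1)] by simp
  then obtain n where n: "(1 / c + 1) / c < real p ^ n" using real_arch_pow by blast
  define M where "M = Suc n"
  have "real p ^ n \<le> real p ^ M" using \<open>real p > 1\<close> by (simp add: M_def)
  then have "(1 / c + 1) / c < real p ^ M" using n by linarith
  then have big: "1 / c + 1 < c * real p ^ M" using c by (simp add: field_simps)
  have "real p ^ l M * \<alpha> > 0" using assms(3) \<open>real p > 1\<close> by simp
  then obtain s where "s \<in> semiconv_dens (real p ^ l M * \<alpha>)" "s \<noteq> 0" "int (p ^ M) dvd s"
    using assms(4)[of M] unfolding infinite_loop_mod_def M_def by auto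
  from m_p_prime_power_le[OF assms(1) _ this] c big show False by (simp add: c_def)
qed

end
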